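(* Let $h:[-1,1]\to(-\infty,+\infty]$ be a potential, $\tau$ a positive integer, $C\subset\mathbb{S}^{n-1}$ a spherical $\tau$-design of cardinality $N$, and $s=s_C$ (so $s\le s_{\tau,N}$). Let $f\in\mathcal{A}(n,s,\tau,h)$. Then $U_h(x,C)\le U_f(x,C)=f_0|C|$ for every $x\in\mathbb{S}^{n-1}$ such that $x\cdot y\in[-1,s]$ for all $y\in C$. Consequently, $\mathcal{Q}_h(C)\le\min_{f\in\mathcal{A}(n,s,\tau,h)}\{f_0|C|\}$.
   Context: $\mathbb{S}^{n-1}$ is the unit sphere in $\mathbb{R}^n$. $U_g(x,C):=\sum_{y\in C}g(x\cdot y)$, $\mathcal{Q}_h(C):=\inf_{x\in\mathbb{S}^{n-1}}U_h(x,C)$. A spherical $\tau$-design is a finite $C\subset\mathbb{S}^{n-1}$ on which the average of every polynomial of degree $\le\tau$ equals its average over the sphere. $s_C:=\min_{x\in\mathbb{S}^{n-1}}\max_{y\in C}x\cdot y$; $s_{\tau,N}:=\max\{s_C: C\text{ a }\tau\text{-design}, |C|=N\}$. $f_0:=\gamma_n\int_{-1}^1f(t)(1-t^2)^{(n-3)/2}dt$ with $\gamma_n\int_{-1}^1(1-t^2)^{(n-3)/2}dt=1$. For $s\in(-1,1]$, $\mathcal{A}(n,s,\tau,h)$ is the set of real polynomials $f$ with $\deg f\le\tau$ and $f(t)\ge h(t)$ for all $t\in[-1,s]$. *)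

theory Defs
  imports "HOL-Analysis.Analysis" "HOL-Computational_Algebra.Polynomial"
begin

text \<open>Unit sphere S^{n-1} in R^n, with n = CARD('n).\<close>
abbreviation usphere :: "(real ^ 'n) set" where
  "usphere \<equiv> sphere 0 1"

definition monomial_fun :: "('n::finite \<Rightarrow> nat) \<Rightarrow> real ^ 'n \<Rightarrow> real" where
  "monomial_fun \<alpha> x = (\<Prod>i\<in>UNIV. (x $ i) ^ (\<alpha> i))"

definition poly_fun_deg :: "nat \<Rightarrow> (real ^ 'n::finite \<Rightarrow> real) \<Rightarrow> bool" where
  "poly_fun_deg \<tau> p \<longleftrightarrow> (\<exists>S c. finite S \<and> (\<forall>\<alpha>\<in>S. (\<Sum>i\<in>UNIV. \<alpha> i) \<le> \<tau>) \<and>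
       p = (\<lambda>x. \<Sum>\<alpha>\<in>S. c \<alpha> * monomial_fun \<alpha> x))"

text \<open>Average over the sphere w.r.t. normalized surface measure, realised via the
  cone measure: the average of g over S^{n-1} equals the average over the unit ball
  of x \<mapsto> g(x/|x|).\<close>
definition sphere_avg :: "(real ^ 'n::finite \<Rightarrow> real) \<Rightarrow> real" where
  "sphere_avg g = integral (ball 0 1) (\<lambda>x. g (x /\<^sub>R norm x)) / measure lebesgue (ball (0::real^'n) 1)"

definition spherical_design :: "nat \<Rightarrow> (real ^ 'n::finite) set \<Rightarrow> bool" where
  "spherical_design \<tau> C \<longleftrightarrow> finite C \<and> C \<noteq> {} \<and> C \<subseteq> usphere \<and>
     (\<forall>p. poly_fun_deg \<tau> p \<longrightarrow> (\<Sum>y\<in>C. p y) / real (card C) = sphere_avg p)"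

definition U :: "(real \<Rightarrow> real) \<Rightarrow> real ^ 'n::finite \<Rightarrow> (real ^ 'n) set \<Rightarrow> real" where
  "U g x C = (\<Sum>y\<in>C. g (x \<bullet> y))"

definition Ue :: "(real \<Rightarrow> ereal) \<Rightarrow> real ^ 'n::finite \<Rightarrow> (real ^ 'n) set \<Rightarrow> ereal" where
  "Ue h x C = (\<Sum>y\<in>C. h (x \<bullet> y))"

definition Qh :: "(real \<Rightarrow> ereal) \<Rightarrow> (real ^ 'n::finite) set \<Rightarrow> ereal" where
  "Qh h C = (INF x\<in>usphere. Ue h x C)"

definition s_C :: "(real ^ 'n::finite) set \<Rightarrow> real" where
  "s_C C = (INF x\<in>usphere. Max ((\<lambda>y. x \<bullet> y) ` C))"

text \<open>f_0 = gamma_n \<integral>_{-1}^1 f(t)(1-t^2)^((n-3)/2) dt, gamma_n the normalising constant.\<close>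
definition gegen_weight :: "nat \<Rightarrow> real \<Rightarrow> real" where
  "gegen_weight n t = (1 - t\<^sup>2) powr ((real n - 3) / 2)"

definition f0 :: "nat \<Rightarrow> real poly \<Rightarrow> real" where
  "f0 n f = integral {-1..1} (\<lambda>t. poly f t * gegen_weight n t) / integral {-1..1} (gegen_weight n)"

definition adm :: "nat \<Rightarrow> real \<Rightarrow> nat \<Rightarrow> (real \<Rightarrow> ereal) \<Rightarrow> real poly set" where
  "adm n s \<tau> h = {f. degree f \<le> \<tau> \<and> (\<forall>t\<in>{-1..s}. ereal (poly f t) \<ge> h t)}"

end

theory Submission
  imports Defs
begin

text \<open>
  If \<open>x \<bullet> y \<in> [-1, s]\<close> for all \<open>y \<in> C\<close>, admissibility of \<open>f\<close> gives \<open>h \<le> f\<close> termwise in \<open>U\<^sub>h(x, C)\<close>.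
  Since \<open>y \<mapsto> f (x \<bullet> y)\<close> is a polynomial of degree at most \<open>\<tau>\<close>, the design property replaces
  \<open>U\<^sub>f(x, C)\<close> by \<open>|C|\<close> times the sphere average of \<open>f (x \<bullet> _)\<close>, and that average is \<open>f\<^sub>0\<close>.
  With the sphere average taken through the unit ball, this comes down to the moments
  \<open>a k\<close> of \<open>(x \<bullet> y / |y|)\<^sup>k\<close> over the unit ball and \<open>q k\<close> of \<open>t\<^sup>k\<close> against \<open>(1 - t\<^sup>2)\<^bsup>(n-3)/2\<^esup>\<close> being proportional:
  both satisfy \<open>(n + k) m (k + 2) = (k + 1) m k\<close> and \<open>m 1 = 0\<close>. For \<open>q\<close> this is an integration by parts
  on \<open>[-1, 1]\<close>. For \<open>a\<close> one integrates by parts in direction \<open>x\<close> against the bump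
  \<open>(x \<bullet> y)\<^bsup>k+1\<^esup> (1 - |y|\<^sup>2)\<^sub>+\<^sup>2\<close>, and evaluates the resulting ball integrals of \<open>|y|\<^sup>m g y\<close> with \<open>g\<close>
  homogeneous of degree 0 as \<open>n / (n + m)\<close> times the integral of \<open>g\<close>.
  Finally \<open>s\<^sub>C\<close> is attained at some \<open>x\<^sub>0\<close> on the compact sphere, and \<open>x\<^sub>0\<close> bounds \<open>Q\<^sub>h(C)\<close>.
\<close>

section \<open>Moments of the Gegenbauer weight\<close>

definition gegen_moment :: "nat \<Rightarrow> nat \<Rightarrow> real" where
  "gegen_moment n k = integral {-1..1} (\<lambda>t. t ^ k * gegen_weight n t)"

lemma gegen_weight_nonneg: "0 \<le> gegen_weight n t"
  by (simp add: gegen_weight_def)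

lemma gegen_weight_add_2_eq: "gegen_weight (n + 2) t = (1 - t\<^sup>2) powr ((real n - 1) / 2)"
  unfolding gegen_weight_def by (simp add: field_simps)

lemma gegen_weight_add_2:
  assumes "\<bar>t\<bar> < 1"
  shows "gegen_weight (n + 2) t = (1 - t\<^sup>2) * gegen_weight n t"
proof -
  have "gegen_weight (n + 2) t = (1 - t\<^sup>2) powr (1 + (real n - 3) / 2)"
    unfolding gegen_weight_def by (simp add: field_simps)
  moreover have "0 < 1 - t\<^sup>2"
    using assms by (simp add: abs_square_less_1)
  ultimately show ?thesis
    by (simp add: powr_add gegen_weight_def)
qed

lemma gegen_weight_add_2_le:
  assumes "t \<in> {-1..1}"
  shows "gegen_weight (n + 2) t \<le> gegen_weight n t"
proof (cases "\<bar>t\<bar> < 1")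
  case True
  then have "0 \<le> 1 - t\<^sup>2" "1 - t\<^sup>2 \<le> 1"
    by (simp_all add: abs_square_le_1 less_imp_le)
  then show ?thesis
    unfolding gegen_weight_add_2[OF True] by (simp add: mult_left_le_one_le gegen_weight_nonneg)
next
  case False
  then have "t\<^sup>2 = 1"
    using assms by (auto simp: abs_if power2_eq_square split: if_splits)
  then show ?thesis
    by (simp add: gegen_weight_def)
qed

lemma continuous_on_gegen_weight_add_2:
  assumes "n \<ge> 2"
  shows "continuous_on {-1..1} (gegen_weight (n + 2))"
  unfolding gegen_weight_add_2_eq[abs_def]
proof (rule continuous_on_powr')
  show "\<forall>t\<in>{-1..1::real}. 0 \<le> 1 - t\<^sup>2 \<and> (1 - t\<^sup>2 = 0 \<longrightarrow> 0 < (real n - 1) / 2)"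
    using assms by (auto simp: abs_square_le_1)
qed (auto intro!: continuous_intros)

lemma integrable_gegen_weight_add_2:
  assumes "n \<ge> 2"
  shows "(\<lambda>t. c * t ^ k * gegen_weight (n + 2) t) integrable_on {-1..1}"
  by (intro integrable_continuous_interval continuous_intros continuous_on_gegen_weight_add_2 assms)

text \<open>The integrand is the derivative of \<open>t\<^sup>k (1 - t\<^sup>2)\<^bsup>(n-1)/2\<^esup>\<close>, which vanishes at \<open>\<plusminus>1\<close>.\<close>
lemma gegen_weight_has_integral_derivative:
  assumes "n \<ge> 2"
  shows "((\<lambda>t. real k * t ^ (k - 1) * gegen_weight (n + 2) t
              - (real n - 1) * (t ^ (k + 1) * gegen_weight n t)) has_integral 0) {-1..1}"
proof -
  define a where "a = (real n - 1) / 2"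
  define F where "F t = t ^ k * gegen_weight (n + 2) t" for t :: real
  have "continuous_on {-1..1} F"
    unfolding F_def by (intro continuous_intros continuous_on_gegen_weight_add_2 assms)
  moreover have "(F has_vector_derivative
      real k * t ^ (k - 1) * gegen_weight (n + 2) t - (real n - 1) * (t ^ (k + 1) * gegen_weight n t)) (at t)"
    if "t \<in> {-1<..<1}" for t
  proof -
    have pos: "0 < 1 - t\<^sup>2"
      using that by (simp add: abs_square_less_1 abs_less_iff)
    have "((\<lambda>t. 1 - t\<^sup>2) has_real_derivative - 2 * t) (at t)"
      by (auto intro!: derivative_eq_intros)
    from DERIV_fun_powr[OF this pos, of a]
    have "((\<lambda>t. (1 - t\<^sup>2) powr a) has_real_derivative a * gegen_weight n t * (- 2 * t)) (at t)"
      unfolding a_def gegen_weight_def by (simp add: field_simps)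
    from DERIV_mult[OF DERIV_pow this]
    have "(F has_real_derivative
        real k * t ^ (k - 1) * gegen_weight (n + 2) t - (real n - 1) * (t ^ (k + 1) * gegen_weight n t)) (at t)"
      unfolding F_def gegen_weight_add_2_eq a_def[symmetric] by (rule DERIV_cong) (simp add: a_def field_simps)
    then show ?thesis
      by (simp add: has_real_derivative_iff_has_vector_derivative)
  qed
  ultimately have "((\<lambda>t. real k * t ^ (k - 1) * gegen_weight (n + 2) t
      - (real n - 1) * (t ^ (k + 1) * gegen_weight n t)) has_integral F 1 - F (-1)) {-1..1}"
    by (intro fundamental_theorem_of_calculus_interior) auto
  moreover have "F 1 = 0" "F (-1) = 0"
    by (simp_all add: F_def gegen_weight_def)
  ultimately show ?thesis
    by simp
qed

lemma gegen_moment_integrable: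
  assumes "n \<ge> 2"
  shows "(\<lambda>t. t ^ k * gegen_weight n t) integrable_on {-1..1}"
proof -
  have succ: "(\<lambda>t. t ^ (j + 1) * gegen_weight n t) integrable_on {-1..1}" for j
  proof -
    have "(\<lambda>t. real j * t ^ (j - 1) * gegen_weight (n + 2) t
              - (real n - 1) * (t ^ (j + 1) * gegen_weight n t)) integrable_on {-1..1}"
      using gegen_weight_has_integral_derivative[OF assms] by (rule has_integral_integrable)
    from integrable_diff[OF integrable_gegen_weight_add_2[OF assms, of "real j" "j - 1"] this]
    have "(\<lambda>t. (real n - 1) * (t ^ (j + 1) * gegen_weight n t)) integrable_on {-1..1}"
      by simp
    then show ?thesis
      using assms by simp
  qed
  show ?thesis
  proof (cases "k = 0")
    case True
    have int: "(\<lambda>t. t ^ 2 * gegen_weight n t + gegen_weight (n + 2) t) integrable_on {-1..1}"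
      using succ[of 1] integrable_gegen_weight_add_2[OF assms, of 1 0]
      by (intro integrable_add) (simp_all add: numeral_2_eq_2)
    have eq: "t ^ k * gegen_weight n t = t ^ 2 * gegen_weight n t + gegen_weight (n + 2) t"
      if "t \<in> {-1..1} - {-1, 1}" for t
      using that True by (subst gegen_weight_add_2) (auto simp: algebra_simps)
    show ?thesis
      by (rule integrable_spike_finite[of "{-1, 1}", OF _ eq int]) simp_all
  next
    case False
    then show ?thesis
      using succ[of "k - 1"] by simp
  qed
qed

lemma gegen_moment_recurrence:
  assumes "n \<ge> 2"
  shows "(real n + real k) * gegen_moment n (k + 2) = (real k + 1) * gegen_moment n k"
proof -
  have "t ^ k * gegen_weight (n + 2) t = t ^ k * gegen_weight n t - t ^ (k + 2) * gegen_weight n t"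
    if "t \<in> {-1..1} - {-1, 1}" for t
    using that by (subst gegen_weight_add_2) (auto simp: power2_eq_square algebra_simps)
  then have "integral {-1..1} (\<lambda>t. t ^ k * gegen_weight (n + 2) t)
      = integral {-1..1} (\<lambda>t. t ^ k * gegen_weight n t - t ^ (k + 2) * gegen_weight n t)"
    by (intro integral_spike[of "{-1, 1}"]) simp_all
  also have "\<dots> = gegen_moment n k - gegen_moment n (k + 2)"
    unfolding gegen_moment_def by (intro integral_diff gegen_moment_integrable assms)
  finally have shifted: "integral {-1..1} (\<lambda>t. t ^ k * gegen_weight (n + 2) t)
      = gegen_moment n k - gegen_moment n (k + 2)" .
  have "0 = integral {-1..1} (\<lambda>t. real (k + 1) * t ^ k * gegen_weight (n + 2) t
      - (real n - 1) * (t ^ (k + 2) * gegen_weight n t))"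
    using integral_unique[OF gegen_weight_has_integral_derivative[OF assms, of "k + 1"]] by simp
  also have "\<dots> = real (k + 1) * integral {-1..1} (\<lambda>t. t ^ k * gegen_weight (n + 2) t)
      - (real n - 1) * gegen_moment n (k + 2)"
  proof -
    have "(\<lambda>t. (real n - 1) * (t ^ (k + 2) * gegen_weight n t)) integrable_on {-1..1}"
      using gegen_moment_integrable[OF assms, of "k + 2"] assms by simp
    with integrable_gegen_weight_add_2[OF assms] show ?thesis
      unfolding gegen_moment_def by (simp add: integral_diff mult.assoc)
  qed
  finally show ?thesis
    unfolding shifted by (simp add: algebra_simps)
qed

lemma gegen_moment_1:
  assumes "n \<ge> 2"
  shows "gegen_moment n 1 = 0"
proof -
  have "integral {-1..1} (\<lambda>t. - ((real n - 1) * (t * gegen_weight n t))) = 0"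
    using integral_unique[OF gegen_weight_has_integral_derivative[OF assms, of 0]] by simp
  then have "(real n - 1) * gegen_moment n 1 = 0"
    by (simp add: gegen_moment_def)
  then show ?thesis
    using assms by simp
qed

lemma gegen_moment_0_pos:
  assumes "n \<ge> 2"
  shows "gegen_moment n 0 > 0"
proof -
  let ?a = "(real n - 1) / 2"
  have integrable: "gegen_weight (n + 2) integrable_on {a..b}" if "{a..b} \<subseteq> {-1..1}" for a b
    by (rule integrable_continuous_interval)
       (rule continuous_on_subset[OF continuous_on_gegen_weight_add_2[OF assms] that])
  have "0 < (3/4::real) powr ?a"
    by simp
  also have "\<dots> = integral {-1/2..1/2} (\<lambda>t::real. (3/4) powr ?a)"
    by simp
  also have "\<dots> \<le> integral {-1/2..1/2} (gegen_weight (n + 2))"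
  proof (rule integral_le)
    fix t :: real
    assume "t \<in> {-1/2..1/2}"
    then have "0 \<le> (1/2 - t) * (1/2 + t)"
      by (intro mult_nonneg_nonneg) auto
    then have "3/4 \<le> 1 - t\<^sup>2"
      by (simp add: power2_eq_square algebra_simps)
    then show "(3/4) powr ?a \<le> gegen_weight (n + 2) t"
      unfolding gegen_weight_add_2_eq using assms by (intro powr_mono2) auto
  qed (rule integrable_const_ivl, rule integrable, simp)
  also have "\<dots> \<le> integral {-1..1} (gegen_weight (n + 2))"
    by (rule integral_subset_le[OF _ integrable integrable]) (simp_all add: gegen_weight_nonneg)
  also have "\<dots> \<le> gegen_moment n 0"
    unfolding gegen_moment_def
  proof (rule integral_le)
    show "gegen_weight (n + 2) t \<le> t ^ 0 * gegen_weight n t" if "t \<in> {-1..1}" for t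
      using gegen_weight_add_2_le[OF that] by simp
  qed (rule integrable, simp, rule gegen_moment_integrable[OF assms])
  finally show ?thesis .
qed

lemma integral_poly_gegen_weight:
  assumes "n \<ge> 2"
  shows "integral {-1..1} (\<lambda>t. poly p t * gegen_weight n t) = (\<Sum>k\<le>degree p. coeff p k * gegen_moment n k)"
proof -
  have "(\<lambda>t. coeff p k * (t ^ k * gegen_weight n t)) integrable_on {-1..1}" for k
    using integrable_cmul[OF gegen_moment_integrable[OF assms], of "coeff p k" k] by simp
  then have "integral {-1..1} (\<lambda>t. \<Sum>k\<le>degree p. coeff p k * (t ^ k * gegen_weight n t))
      = (\<Sum>k\<le>degree p. coeff p k * gegen_moment n k)"
    by (simp add: integral_sum gegen_moment_def)
  then show ?thesis
    by (simp add: poly_altdef sum_distrib_right mult.assoc)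
qed

section \<open>Polynomial functions on \<open>\<real>\<^sup>n\<close>\<close>

lemma finite_multidegree_le: "finite {\<alpha> :: 'n::finite \<Rightarrow> nat. sum \<alpha> UNIV \<le> d}"
proof (rule finite_subset)
  show "{\<alpha> :: 'n \<Rightarrow> nat. sum \<alpha> UNIV \<le> d}
      \<subseteq> {\<alpha>. \<forall>i. (i \<in> UNIV \<longrightarrow> \<alpha> i \<in> {..d}) \<and> (i \<notin> UNIV \<longrightarrow> \<alpha> i = 0)}"
  proof clarsimp
    fix \<alpha> :: "'n \<Rightarrow> nat" and i
    assume "sum \<alpha> UNIV \<le> d"
    moreover have "\<alpha> i \<le> sum \<alpha> UNIV"
      by (rule member_le_sum) simp_all
    ultimately show "\<alpha> i \<le> d"
      by simp
  qed
  show "finite {\<alpha> :: 'n \<Rightarrow> nat. \<forall>i. (i \<in> UNIV \<longrightarrow> \<alpha> i \<in> {..d}) \<and> (i \<notin> UNIV \<longrightarrow> \<alpha> i = 0)}"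
    by (rule finite_set_of_finite_funs) simp_all
qed

lemma poly_fun_deg_iff:
  "poly_fun_deg d p \<longleftrightarrow>
     (\<exists>c. p = (\<lambda>x. \<Sum>\<alpha> | sum \<alpha> UNIV \<le> d. c \<alpha> * monomial_fun \<alpha> x))"
proof
  assume "poly_fun_deg d p"
  then obtain S c where S: "finite S" "\<forall>\<alpha>\<in>S. sum \<alpha> UNIV \<le> d"
    and p: "p = (\<lambda>x. \<Sum>\<alpha>\<in>S. c \<alpha> * monomial_fun \<alpha> x)"
    unfolding poly_fun_deg_def by blast
  have "(\<Sum>\<alpha> | sum \<alpha> UNIV \<le> d. (if \<alpha> \<in> S then c \<alpha> else 0) * monomial_fun \<alpha> x)
      = (\<Sum>\<alpha>\<in>S. c \<alpha> * monomial_fun \<alpha> x)" for x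
    using S by (intro sum.mono_neutral_cong_right finite_multidegree_le) auto
  then show "\<exists>c. p = (\<lambda>x. \<Sum>\<alpha> | sum \<alpha> UNIV \<le> d. c \<alpha> * monomial_fun \<alpha> x)"
    unfolding p by (intro exI[of _ "\<lambda>\<alpha>. if \<alpha> \<in> S then c \<alpha> else 0"]) simp
next
  assume "\<exists>c. p = (\<lambda>x. \<Sum>\<alpha> | sum \<alpha> UNIV \<le> d. c \<alpha> * monomial_fun \<alpha> x)"
  then show "poly_fun_deg d p"
    unfolding poly_fun_deg_def using finite_multidegree_le by blast
qed

lemma poly_fun_deg_mono: "poly_fun_deg d p \<Longrightarrow> d \<le> e \<Longrightarrow> poly_fun_deg e p"
  unfolding poly_fun_deg_def using order_trans by blast

lemma poly_fun_deg_one: "poly_fun_deg d (\<lambda>_. 1)"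
  unfolding poly_fun_deg_def
  by (intro exI[of _ "{\<lambda>_. 0}"] exI[of _ "\<lambda>_. 1"]) (simp add: monomial_fun_def)

lemma poly_fun_deg_lincomb:
  assumes "finite I" and "\<And>i. i \<in> I \<Longrightarrow> poly_fun_deg d (f i)"
  shows "poly_fun_deg d (\<lambda>x. \<Sum>i\<in>I. a i * f i x)"
proof -
  from assms(2) obtain c where c: "\<And>i. i \<in> I \<Longrightarrow>
      f i = (\<lambda>x. \<Sum>\<alpha> | sum \<alpha> UNIV \<le> d. c i \<alpha> * monomial_fun \<alpha> x)"
    unfolding poly_fun_deg_iff by metis
  have "(\<lambda>x. \<Sum>i\<in>I. a i * f i x)
      = (\<lambda>x. \<Sum>\<alpha> | sum \<alpha> UNIV \<le> d. (\<Sum>i\<in>I. a i * c i \<alpha>) * monomial_fun \<alpha> x)"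
  proof
    fix x
    have "(\<Sum>i\<in>I. a i * f i x)
        = (\<Sum>i\<in>I. \<Sum>\<alpha> | sum \<alpha> UNIV \<le> d. a i * c i \<alpha> * monomial_fun \<alpha> x)"
      by (simp add: c sum_distrib_left mult.assoc)
    also have "\<dots> = (\<Sum>\<alpha> | sum \<alpha> UNIV \<le> d. \<Sum>i\<in>I. a i * c i \<alpha> * monomial_fun \<alpha> x)"
      by (rule sum.swap)
    also have "\<dots> = (\<Sum>\<alpha> | sum \<alpha> UNIV \<le> d. (\<Sum>i\<in>I. a i * c i \<alpha>) * monomial_fun \<alpha> x)"
      by (simp add: sum_distrib_right)
    finally show "(\<Sum>i\<in>I. a i * f i x)
        = (\<Sum>\<alpha> | sum \<alpha> UNIV \<le> d. (\<Sum>i\<in>I. a i * c i \<alpha>) * monomial_fun \<alpha> x)" .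
  qed
  then show ?thesis
    unfolding poly_fun_deg_iff by (rule exI[of _ "\<lambda>\<alpha>. \<Sum>i\<in>I. a i * c i \<alpha>"])
qed

lemma poly_fun_deg_coord_mult:
  fixes p :: "real ^ 'n::finite \<Rightarrow> real"
  assumes "poly_fun_deg d p"
  shows "poly_fun_deg (Suc d) (\<lambda>x. x $ j * p x)"
proof -
  obtain S c where S: "finite S" "\<forall>\<alpha>\<in>S. sum \<alpha> UNIV \<le> d"
    and p: "p = (\<lambda>x. \<Sum>\<alpha>\<in>S. c \<alpha> * monomial_fun \<alpha> x)"
    using assms unfolding poly_fun_deg_def by blast
  define inc :: "('n \<Rightarrow> nat) \<Rightarrow> 'n \<Rightarrow> nat" where "inc \<alpha> = \<alpha>(j := Suc (\<alpha> j))" for \<alpha>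
  have "inj inc"
  proof (rule injI, rule ext)
    fix \<alpha> \<beta> i
    assume "inc \<alpha> = inc \<beta>"
    then have "inc \<alpha> i = inc \<beta> i"
      by simp
    then show "\<alpha> i = \<beta> i"
      unfolding inc_def by (cases "i = j") auto
  qed
  have inc_off_j: "sum (inc \<alpha>) (UNIV - {j}) = sum \<alpha> (UNIV - {j})"
    "(\<Prod>i\<in>UNIV - {j}. (x $ i) ^ inc \<alpha> i) = (\<Prod>i\<in>UNIV - {j}. (x $ i) ^ \<alpha> i)" for \<alpha> and x :: "real ^ 'n"
    by (auto intro!: sum.cong prod.cong simp: inc_def)
  have inc_sum: "sum (inc \<alpha>) UNIV = Suc (sum \<alpha> UNIV)" for \<alpha>
    using sum.remove[of UNIV j "inc \<alpha>"] sum.remove[of UNIV j \<alpha>] inc_off_j(1)[of \<alpha>]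
    by (simp add: inc_def)
  have inc_monomial: "monomial_fun (inc \<alpha>) x = x $ j * monomial_fun \<alpha> x" for \<alpha> x
    using prod.remove[of UNIV j "\<lambda>i. (x $ i) ^ inc \<alpha> i"] prod.remove[of UNIV j "\<lambda>i. (x $ i) ^ \<alpha> i"]
      inc_off_j(2)[of x \<alpha>]
    by (simp add: monomial_fun_def inc_def)
  have "(\<lambda>x. x $ j * p x) = (\<lambda>x. \<Sum>\<beta>\<in>inc ` S. c (inv inc \<beta>) * monomial_fun \<beta> x)"
    unfolding p by (simp add: sum.reindex inj_on_subset[OF \<open>inj inc\<close>] inc_monomial sum_distrib_left mult.left_commute)
  moreover have "\<forall>\<beta>\<in>inc ` S. sum \<beta> UNIV \<le> Suc d"
    using S(2) by (simp add: inc_sum)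
  ultimately show ?thesis
    unfolding poly_fun_deg_def using S(1) by (intro exI conjI) (auto simp del: image_iff)
qed

lemma poly_fun_deg_inner_power: "poly_fun_deg k (\<lambda>y. (x \<bullet> y) ^ k)"
proof (induction k)
  case 0
  then show ?case by (simp add: poly_fun_deg_one)
next
  case (Suc k)
  have "(x \<bullet> y) ^ Suc k = (\<Sum>i\<in>UNIV. x $ i * (y $ i * (x \<bullet> y) ^ k))" for y
    by (simp add: inner_vec_def sum_distrib_right mult.assoc)
  moreover have "poly_fun_deg (Suc k) (\<lambda>y. \<Sum>i\<in>UNIV. x $ i * (y $ i * (x \<bullet> y) ^ k))"
    by (intro poly_fun_deg_lincomb poly_fun_deg_coord_mult Suc) simp
  ultimately show ?case
    by simp
qed

lemma poly_fun_deg_poly_inner: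
  assumes "degree f \<le> d"
  shows "poly_fun_deg d (\<lambda>y. poly f (x \<bullet> y))"
proof -
  have "poly_fun_deg d (\<lambda>y. \<Sum>k\<le>degree f. coeff f k * (x \<bullet> y) ^ k)"
    using assms by (intro poly_fun_deg_lincomb poly_fun_deg_mono[OF poly_fun_deg_inner_power]) auto
  then show ?thesis
    by (simp add: poly_altdef)
qed

section \<open>Homogeneous functions on the unit ball\<close>

lemma integrable_on_if_bounded_measurable:
  fixes f :: "'a::euclidean_space \<Rightarrow> real"
  assumes "f \<in> borel_measurable borel" and "S \<in> lmeasurable"
    and "\<And>y. y \<in> S \<Longrightarrow> \<bar>f y\<bar> \<le> K"
  shows "f integrable_on S"
proof (rule measurable_bounded_by_integrable_imp_integrable_real[of f S "\<lambda>_. K"])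
  have "f \<in> borel_measurable lebesgue"
    using assms(1) by (intro measurable_completion) simp
  then show "f \<in> borel_measurable (lebesgue_on S)"
    by (rule measurable_restrict_space1)
  show "(\<lambda>_. K) integrable_on S"
    using assms(2) by (rule integrable_on_const)
  show "S \<in> sets lebesgue"
    using assms(2) by (simp add: fmeasurable_def)
qed (use assms(3) in auto)

lemma ball_subset_cbox_One: "ball (0::'a::euclidean_space) r \<subseteq> cbox (- (r *\<^sub>R One)) (r *\<^sub>R One)"
proof
  fix y :: 'a
  assume y: "y \<in> ball 0 r"
  show "y \<in> cbox (- (r *\<^sub>R One)) (r *\<^sub>R One)"
    unfolding mem_box
  proof
    fix i :: 'a
    assume i: "i \<in> Basis"
    have "\<bar>y \<bullet> i\<bar> < r"
      using Basis_le_norm[OF i, of y] y by simp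
    then show "- (r *\<^sub>R One) \<bullet> i \<le> y \<bullet> i \<and> y \<bullet> i \<le> (r *\<^sub>R One) \<bullet> i"
      using i by (simp add: inner_minus_left abs_less_iff)
  qed
qed

lemma has_integral_rescale_ball:
  fixes f :: "'a::euclidean_space \<Rightarrow> real"
  assumes "r > 0" and "(f has_integral I) (ball 0 r)"
  shows "((\<lambda>z. f (r *\<^sub>R z)) has_integral I / r ^ DIM('a)) (ball 0 1)"
proof -
  let ?g = "\<lambda>y. if y \<in> ball 0 r then f y else 0"
  have "(?g has_integral I) (cbox (- (r *\<^sub>R One)) (r *\<^sub>R One))"
    using has_integral_restrict[OF ball_subset_cbox_One] assms(2) by blast
  from has_integral_affinity'[OF this assms(1), where c = 0]
  have "((\<lambda>z. ?g (r *\<^sub>R z + 0)) has_integral I /\<^sub>R r ^ DIM('a))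
      (cbox ((- (r *\<^sub>R One) - 0) /\<^sub>R r) ((r *\<^sub>R One - 0) /\<^sub>R r))" .
  moreover have "(\<lambda>z. ?g (r *\<^sub>R z + 0)) = (\<lambda>z. if z \<in> ball 0 1 then f (r *\<^sub>R z) else 0)"
    using assms(1) by (auto simp: fun_eq_iff)
  ultimately have "((\<lambda>z. if z \<in> ball 0 1 then f (r *\<^sub>R z) else 0) has_integral I / r ^ DIM('a))
      (cbox (- (1 *\<^sub>R One)) (1 *\<^sub>R One))"
    using assms(1) by (simp add: divide_inverse_commute)
  then show ?thesis
    using has_integral_restrict[OF ball_subset_cbox_One[of 1]] by blast
qed

lemma integral_ball_homogeneous:
  fixes F :: "'a::euclidean_space \<Rightarrow> real"
  assumes hom: "\<And>c y. c > 0 \<Longrightarrow> F (c *\<^sub>R y) = c ^ m * F y"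
    and "F integrable_on ball 0 r" and "r > 0"
  shows "integral (ball 0 r) F = r ^ (DIM('a) + m) * integral (ball 0 1) F"
proof -
  have "((\<lambda>z. F (r *\<^sub>R z)) has_integral integral (ball 0 r) F / r ^ DIM('a)) (ball 0 1)"
    using assms(2,3) by (intro has_integral_rescale_ball integrable_integral)
  then have "((\<lambda>z. r ^ m * F z) has_integral integral (ball 0 r) F / r ^ DIM('a)) (ball 0 1)"
    using hom[OF \<open>r > 0\<close>] by simp
  from integral_unique[OF this]
  have "r ^ m * integral (ball 0 1) F = integral (ball 0 r) F / r ^ DIM('a)"
    by simp
  then show ?thesis
    using \<open>r > 0\<close> by (simp add: power_add eq_divide_eq mult_ac)
qed

lemma derivative_nonneg_if_nonneg_right:
  fixes f :: "real \<Rightarrow> real"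
  assumes "(f has_real_derivative D) (at a)" and "f a = 0" and "\<And>r. a < r \<Longrightarrow> 0 \<le> f r"
  shows "0 \<le> D"
proof (rule tendsto_lowerbound)
  show "((\<lambda>r. (f r - f a) / (r - a)) \<longlongrightarrow> D) (at_right a)"
    using assms(1) unfolding has_field_derivative_iff by (rule tendsto_mono[rotated]) (simp add: at_le)
  show "\<forall>\<^sub>F r in at_right a. 0 \<le> (f r - f a) / (r - a)"
    using eventually_at_right_less by (rule eventually_mono) (simp add: assms(2,3))
qed simp

lemma eq_of_power_sandwich:
  fixes G H :: real
  assumes "\<And>r. 1 < r \<Longrightarrow> (r ^ n - 1) * H \<le> (r ^ (n + m) - 1) * G"
    and "\<And>r. 1 < r \<Longrightarrow> (r ^ (n + m) - 1) * G \<le> r ^ m * ((r ^ n - 1) * H)"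
  shows "(real n + real m) * G = real n * H"
proof -
  have "0 \<le> (real n + real m) * G - real n * H"
  proof (rule derivative_nonneg_if_nonneg_right)
    show "((\<lambda>r. (r ^ (n + m) - 1) * G - (r ^ n - 1) * H) has_real_derivative
        (real n + real m) * G - real n * H) (at 1)"
      by (auto intro!: derivative_eq_intros)
    show "0 \<le> (r ^ (n + m) - 1) * G - (r ^ n - 1) * H" if "1 < r" for r
      using assms(1)[OF that] by simp
  qed simp
  moreover have "0 \<le> real n * H - (real n + real m) * G"
  proof (rule derivative_nonneg_if_nonneg_right)
    show "((\<lambda>r. r ^ m * ((r ^ n - 1) * H) - (r ^ (n + m) - 1) * G) has_real_derivative
        real n * H - (real n + real m) * G) (at 1)"
      by (auto intro!: derivative_eq_intros)
    show "0 \<le> r ^ m * ((r ^ n - 1) * H) - (r ^ (n + m) - 1) * G" if "1 < r" for r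
      using assms(2)[OF that] by simp
  qed simp
  ultimately show ?thesis
    by simp
qed

lemma integral_shell_norm_power_mult_bounds:
  fixes g :: "'a::euclidean_space \<Rightarrow> real"
  assumes g_int: "\<And>r. g integrable_on ball 0 r"
    and F_int: "\<And>r. (\<lambda>y. norm y ^ m * g y) integrable_on ball 0 r"
    and nonneg: "\<And>y. 0 \<le> g y" and "1 < r"
  defines "F \<equiv> \<lambda>y. norm y ^ m * g y"
  shows "integral (ball 0 r) g - integral (ball 0 1) g \<le> integral (ball 0 r) F - integral (ball 0 1) F"
    and "integral (ball 0 r) F - integral (ball 0 1) F \<le> r ^ m * (integral (ball 0 r) g - integral (ball 0 1) g)"
proof -
  let ?S = "ball 0 r - ball (0::'a) 1"
  have "ball (0::'a) 1 \<subseteq> ball 0 r"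
    using \<open>1 < r\<close> by (intro subset_ball) simp
  then have neg: "negligible (ball (0::'a) 1 - ball 0 r)"
    by simp
  have shell_int: "f integrable_on ?S" if "\<And>r. f integrable_on ball 0 r" for f :: "'a \<Rightarrow> real"
    using integrable_setdiff[OF integrable_integral[OF that] integrable_integral[OF that] neg] .
  have shell_integral: "integral ?S f = integral (ball 0 r) f - integral (ball 0 1) f"
    if "\<And>r. f integrable_on ball 0 r" for f :: "'a \<Rightarrow> real"
    using integral_setdiff[OF that that neg] .
  have "integral ?S g \<le> integral ?S F"
  proof (rule integral_le[OF shell_int shell_int])
    fix y
    assume "y \<in> ?S"
    then have "1 \<le> norm y ^ m"
      by (simp add: one_le_power)
    then show "g y \<le> F y"
      unfolding F_def using nonneg[of y] by (metis mult_1 mult_right_mono)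
  qed (use g_int F_int in \<open>simp_all add: F_def\<close>)
  then show "integral (ball 0 r) g - integral (ball 0 1) g \<le> integral (ball 0 r) F - integral (ball 0 1) F"
    using g_int F_int by (simp add: shell_integral F_def)
  have "integral ?S F \<le> integral ?S (\<lambda>y. r ^ m * g y)"
  proof (rule integral_le[OF shell_int shell_int])
    fix y
    assume "y \<in> ?S"
    then have "norm y ^ m \<le> r ^ m"
      by (intro power_mono) auto
    then show "F y \<le> r ^ m * g y"
      unfolding F_def using nonneg[of y] by (simp add: mult_right_mono)
  qed (use F_int integrable_cmul[OF g_int] in \<open>simp_all add: F_def\<close>)
  then show "integral (ball 0 r) F - integral (ball 0 1) F \<le> r ^ m * (integral (ball 0 r) g - integral (ball 0 1) g)"
    using g_int F_int integrable_cmul[OF g_int] by (simp add: shell_integral F_def)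
qed

text \<open>Over \<open>ball 0 r\<close> the two integrals scale like \<open>r\<^bsup>n+m\<^esup>\<close> and \<open>r\<^bsup>n\<^esup>\<close>; on the shell
  \<open>1 \<le> |y| < r\<close> the integrands are comparable up to the factor \<open>r\<^sup>m\<close>, and letting \<open>r \<rightarrow> 1\<close>
  compares the two derivatives at \<open>r = 1\<close>.\<close>
lemma integral_ball_norm_power_mult_homogeneous_nonneg:
  fixes g :: "'a::euclidean_space \<Rightarrow> real"
  assumes meas: "g \<in> borel_measurable borel"
    and hom: "\<And>c y. c > 0 \<Longrightarrow> g (c *\<^sub>R y) = g y"
    and nonneg: "\<And>y. 0 \<le> g y" and bounded: "\<And>y. g y \<le> K"
  shows "(real DIM('a) + real m) * integral (ball 0 1) (\<lambda>y. norm y ^ m * g y)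
       = real DIM('a) * integral (ball 0 1) g"
proof -
  let ?n = "DIM('a)"
  define F where "F y = norm y ^ m * g y" for y :: 'a
  define G1 H1 where "G1 = integral (ball 0 1) F" and "H1 = integral (ball 0 1) g"
  have g_int: "g integrable_on ball 0 r" for r
    using nonneg bounded by (intro integrable_on_if_bounded_measurable[OF meas, of _ K]) auto
  have F_int: "F integrable_on ball 0 r" for r
  proof (rule integrable_on_if_bounded_measurable[of _ _ "\<bar>r\<bar> ^ m * K"])
    show "F \<in> borel_measurable borel"
      unfolding F_def using meas by measurable
    fix y :: 'a
    assume "y \<in> ball 0 r"
    then have "norm y ^ m \<le> \<bar>r\<bar> ^ m"
      by (intro power_mono) auto
    then show "\<bar>F y\<bar> \<le> \<bar>r\<bar> ^ m * K"
      unfolding F_def using nonneg[of y] bounded[of y] by (simp add: abs_mult mult_mono)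
  qed simp
  have H: "integral (ball 0 r) g = r ^ ?n * H1" if "r > 0" for r
    using integral_ball_homogeneous[of g 0, OF _ g_int that] hom unfolding H1_def by simp
  have G: "integral (ball 0 r) F = r ^ (?n + m) * G1" if "r > 0" for r
    unfolding G1_def using hom that
    by (intro integral_ball_homogeneous F_int) (simp add: F_def power_mult_distrib)
  have shell: "(r ^ ?n - 1) * H1 \<le> (r ^ (?n + m) - 1) * G1"
    "(r ^ (?n + m) - 1) * G1 \<le> r ^ m * ((r ^ ?n - 1) * H1)" if "r > 1" for r
  proof -
    have "(\<lambda>y. norm y ^ m * g y) = F"
      by (simp add: F_def fun_eq_iff)
    then show "(r ^ ?n - 1) * H1 \<le> (r ^ (?n + m) - 1) * G1"
      "(r ^ (?n + m) - 1) * G1 \<le> r ^ m * ((r ^ ?n - 1) * H1)"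
      using integral_shell_norm_power_mult_bounds[OF g_int F_int[unfolded F_def] nonneg that] that
      by (simp_all add: H G algebra_simps)
  qed
  from eq_of_power_sandwich[OF shell]
  show ?thesis
    unfolding G1_def H1_def F_def .
qed

lemma integral_ball_norm_power_mult_homogeneous:
  fixes g :: "'a::euclidean_space \<Rightarrow> real"
  assumes meas: "g \<in> borel_measurable borel"
    and hom: "\<And>c y. c > 0 \<Longrightarrow> g (c *\<^sub>R y) = g y"
    and bounded: "\<And>y. \<bar>g y\<bar> \<le> K"
  shows "(real DIM('a) + real m) * integral (ball 0 1) (\<lambda>y. norm y ^ m * g y)
       = real DIM('a) * integral (ball 0 1) g"
proof -
  have "0 \<le> K"
    using bounded[of 0] by simp
  have int: "f integrable_on ball 0 1" if "f \<in> borel_measurable borel" "\<And>y. norm y < 1 \<Longrightarrow> \<bar>f y\<bar> \<le> K"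
    for f :: "'a \<Rightarrow> real"
    using that by (intro integrable_on_if_bounded_measurable[of _ _ K]) auto
  have norm_power_le: "norm y ^ m \<le> 1" if "norm y < 1" for y :: 'a
    using that by (simp add: power_le_one)
  have "norm y ^ m * \<bar>g y\<bar> \<le> K" if "norm y < 1" for y
    using mult_mono[OF norm_power_le[OF that] bounded[of y]] by simp
  have ints: "g integrable_on ball 0 1" "(\<lambda>_. K) integrable_on ball (0::'a) 1"
    "(\<lambda>y. norm y ^ m * g y) integrable_on ball 0 1" "(\<lambda>y::'a. norm y ^ m * K) integrable_on ball 0 1"
    using meas bounded \<open>0 \<le> K\<close> norm_power_le \<open>\<And>y. norm y < 1 \<Longrightarrow> norm y ^ m * \<bar>g y\<bar> \<le> K\<close>
    by (auto intro!: int simp: abs_mult mult_left_le_one_le)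
  have "(real DIM('a) + real m) * integral (ball 0 1) (\<lambda>y. norm y ^ m * (g y + K))
      = real DIM('a) * integral (ball 0 1) (\<lambda>y. g y + K)"
  proof (rule integral_ball_norm_power_mult_homogeneous_nonneg[of _ "2 * K"])
    show "0 \<le> g y + K" "g y + K \<le> 2 * K" for y
      using bounded[of y] by (simp_all add: abs_le_iff)
  qed (use meas hom in simp_all)
  moreover have "(real DIM('a) + real m) * integral (ball 0 1) (\<lambda>y::'a. norm y ^ m * K)
      = real DIM('a) * integral (ball 0 1) (\<lambda>y::'a. K)"
    using \<open>0 \<le> K\<close> by (intro integral_ball_norm_power_mult_homogeneous_nonneg[of _ K]) auto
  ultimately show ?thesis
    using ints by (simp add: distrib_left integral_add algebra_simps)
qed

section \<open>Integration by parts in one direction\<close>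

lemma has_integral_translate_UNIV:
  fixes f :: "'a::euclidean_space \<Rightarrow> real"
  assumes "(f has_integral I) (cbox a b)" and "\<And>y. y \<notin> cbox a b \<Longrightarrow> f y = 0"
  shows "((\<lambda>y. f (y + c)) has_integral I) UNIV"
proof (rule has_integral_on_superset[OF has_integral_shift_cbox[OF assms(1)]])
  fix y
  have "y + c \<in> cbox a b \<longleftrightarrow> y \<in> cbox (a - c) (b - c)"
    unfolding mem_box inner_diff_left inner_add_left by (intro ball_cong) auto
  moreover assume "y \<notin> cbox (a - c) (b - c)"
  ultimately show "f (y + c) = 0"
    by (intro assms(2)) simp
qed simp

lemma has_integral_translate_diff_0:
  fixes \<phi> :: "'a::euclidean_space \<Rightarrow> real"
  assumes "continuous_on UNIV \<phi>" and "\<And>y. R \<le> norm y \<Longrightarrow> \<phi> y = 0"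
  shows "((\<lambda>y. \<phi> (y + u) - \<phi> y) has_integral 0) UNIV"
proof -
  let ?cube = "cbox (- (R *\<^sub>R One)) (R *\<^sub>R One) :: 'a set"
  have outside: "\<phi> y = 0" if "y \<notin> ?cube" for y
    using that ball_subset_cbox_One[of R] by (intro assms(2)) (auto simp: not_less)
  obtain I where I: "(\<phi> has_integral I) ?cube"
    using integrable_continuous[OF continuous_on_subset[OF assms(1) subset_UNIV]]
    unfolding integrable_on_def by blast
  have "((\<lambda>y. \<phi> (y + u) - \<phi> (y + 0)) has_integral I - I) UNIV"
    by (intro has_integral_diff has_integral_translate_UNIV[OF I outside])
  then show ?thesis
    by simp
qed

lemma difference_quotient_bound:
  fixes \<phi> D :: "'a::real_normed_vector \<Rightarrow> real"
  assumes support: "\<And>y. R \<le> norm y \<Longrightarrow> \<phi> y = 0"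
    and deriv: "\<And>y t. ((\<lambda>t. \<phi> (y + t *\<^sub>R v)) has_real_derivative D (y + t *\<^sub>R v)) (at t)"
    and D_bound: "\<And>z. norm z \<le> R + 2 * norm v \<Longrightarrow> \<bar>D z\<bar> \<le> B"
    and "0 < h" and "h \<le> 1"
  shows "\<bar>(\<phi> (y + h *\<^sub>R v) - \<phi> y) / h\<bar> \<le> (if norm y \<le> R + norm v then B else 0)"
proof (cases "norm y \<le> R + norm v")
  case True
  obtain z where z: "0 < z" "z < h"
    and mvt: "\<phi> (y + h *\<^sub>R v) - \<phi> (y + 0 *\<^sub>R v) = (h - 0) * D (y + z *\<^sub>R v)"
    using MVT2[of 0 h "\<lambda>t. \<phi> (y + t *\<^sub>R v)" "\<lambda>t. D (y + t *\<^sub>R v)"] \<open>0 < h\<close> deriv by blast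
  have "norm (y + z *\<^sub>R v) \<le> norm y + z * norm v"
    using norm_triangle_ineq[of y "z *\<^sub>R v"] z by simp
  also have "\<dots> \<le> R + 2 * norm v"
    using True z \<open>h \<le> 1\<close> mult_left_le_one_le[of "norm v" z] by auto
  finally show ?thesis
    using mvt D_bound True \<open>0 < h\<close> by simp
next
  case False
  moreover have "norm y - norm (h *\<^sub>R v) \<le> norm (y + h *\<^sub>R v)"
    by (rule norm_diff_ineq)
  moreover have "norm (h *\<^sub>R v) \<le> norm v"
    using \<open>0 < h\<close> \<open>h \<le> 1\<close> mult_left_le_one_le[of "norm v" h] by simp
  ultimately have "R \<le> norm (y + h *\<^sub>R v)" "R \<le> norm y"
    using norm_ge_zero[of v] by linarith+
  then show ?thesis
    using False by (simp add: support)
qed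

text \<open>Dominated convergence for the difference quotients of \<open>\<phi>\<close> in direction \<open>v\<close>, each of which
  has integral \<open>0\<close> by translation invariance.\<close>
lemma integral_directional_derivative_eq_0:
  fixes \<phi> D :: "'a::euclidean_space \<Rightarrow> real"
  assumes \<phi>_cont: "continuous_on UNIV \<phi>" and D_cont: "continuous_on UNIV D"
    and support: "\<And>y. R \<le> norm y \<Longrightarrow> \<phi> y = 0"
    and deriv: "\<And>y t. ((\<lambda>t. \<phi> (y + t *\<^sub>R v)) has_real_derivative D (y + t *\<^sub>R v)) (at t)"
  shows "integral UNIV D = 0"
proof -
  define h where "h k = inverse (real (Suc k))" for k
  have h: "0 < h k" "h k \<le> 1" for k
    unfolding h_def by (simp_all add: inverse_le_1_iff)
  define q where "q k y = (\<phi> (y + h k *\<^sub>R v) - \<phi> y) / h k" for k y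
  have q_integral: "(q k has_integral 0) UNIV" for k
    using has_integral_mult_right[OF has_integral_translate_diff_0[OF \<phi>_cont support, where u = "h k *\<^sub>R v"],
        where c = "inverse (h k)"]
    unfolding q_def by (simp add: divide_inverse mult.commute)
  have "bounded (D ` cball 0 (R + 2 * norm v))"
    by (intro compact_imp_bounded compact_continuous_image continuous_on_subset[OF D_cont]) auto
  then obtain B where B: "\<forall>z\<in>cball 0 (R + 2 * norm v). \<bar>D z\<bar> \<le> B"
    unfolding bounded_iff by auto
  define bound where "bound y = (if norm y \<le> R + norm v then B else 0)" for y :: 'a
  have "bound integrable_on UNIV"
    unfolding bound_def using integrable_restrict_UNIV[of "cball 0 (R + norm v)" "\<lambda>_. B"]
    by (simp add: integrable_on_const)
  moreover have "norm (q k y) \<le> bound y" for k y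
    unfolding q_def bound_def real_norm_def
    using B h[of k] by (intro difference_quotient_bound[OF support deriv]) auto
  moreover have "(\<lambda>k. q k y) \<longlonglongrightarrow> D y" for y
  proof -
    have "((\<lambda>t. (\<phi> (y + t *\<^sub>R v) - \<phi> (y + 0 *\<^sub>R v)) / (t - 0)) \<longlongrightarrow> D (y + 0 *\<^sub>R v)) (at 0)"
      using deriv[of y 0] by (simp only: has_field_derivative_iff)
    then have "((\<lambda>t. (\<phi> (y + t *\<^sub>R v) - \<phi> y) / t) \<longlongrightarrow> D y) (at 0)"
      by simp
    moreover have "filterlim h (at 0) sequentially"
      unfolding filterlim_at h_def
      using LIMSEQ_inverse_real_of_nat by (simp add: always_eventually)
    ultimately show ?thesis
      unfolding q_def by (rule filterlim_compose)
  qed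
  ultimately have "(\<lambda>k. integral UNIV (q k)) \<longlonglongrightarrow> integral UNIV D"
    using q_integral[THEN has_integral_integrable] by (intro dominated_convergence(2)[of q UNIV bound D]) auto
  moreover have "(\<lambda>k. integral UNIV (q k)) = (\<lambda>k. 0)"
    using q_integral integral_unique by blast
  ultimately show ?thesis
    by (simp add: LIMSEQ_const_iff)
qed

lemma has_real_derivative_max_0_square: "((\<lambda>u. (max 0 u)\<^sup>2) has_real_derivative 2 * max 0 u) (at u)"
proof (cases "u = 0")
  case True
  have "((\<lambda>v::real. ((max 0 v)\<^sup>2 - (max 0 0)\<^sup>2) / (v - 0)) \<longlongrightarrow> 0) (at 0)"
  proof (rule Lim_null_comparison)
    show "\<forall>\<^sub>F v in at 0. norm (((max 0 v)\<^sup>2 - (max 0 0)\<^sup>2) / (v - 0)) \<le> \<bar>v\<bar>"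
      by (intro always_eventually allI) (simp add: max_def power2_eq_square)
    show "((\<lambda>v. \<bar>v\<bar>) \<longlongrightarrow> 0) (at (0::real))"
      using tendsto_rabs[OF tendsto_ident_at[of 0 UNIV]] by simp
  qed
  then show ?thesis
    using True by (simp add: has_field_derivative_iff)
next
  case False
  let ?S = "if 0 < u then {0<..} else {..<0::real}"
  have "((\<lambda>v. if 0 < u then v\<^sup>2 else 0) has_real_derivative (if 0 < u then 2 * u else 0)) (at u)"
    by (cases "0 < u") (auto intro!: derivative_eq_intros)
  then have "((\<lambda>v. if 0 < u then v\<^sup>2 else 0) has_real_derivative 2 * max 0 u) (at u)"
    by (rule DERIV_cong) simp
  moreover have "open ?S" "u \<in> ?S"
    using False by auto
  ultimately show ?thesis
    by (rule has_field_derivative_transform_within_open) (auto split: if_splits)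
qed

lemma has_real_derivative_inner_power_bump:
  fixes x y :: "'a::real_inner" and t :: real
  assumes "norm x = 1"
  defines "z \<equiv> y + t *\<^sub>R x"
  shows "((\<lambda>s. (x \<bullet> (y + s *\<^sub>R x)) ^ j * (max 0 (1 - (norm (y + s *\<^sub>R x))\<^sup>2))\<^sup>2) has_real_derivative
      real j * (x \<bullet> z) ^ (j - 1) * (max 0 (1 - (norm z)\<^sup>2))\<^sup>2
      - 4 * (x \<bullet> z) ^ (j + 1) * max 0 (1 - (norm z)\<^sup>2)) (at t)"
proof -
  have "x \<bullet> x = 1"
    using assms by (simp add: dot_square_norm)
  then have inner: "x \<bullet> (y + s *\<^sub>R x) = x \<bullet> y + s"
    and norm: "(norm (y + s *\<^sub>R x))\<^sup>2 = (norm y)\<^sup>2 + 2 * s * (x \<bullet> y) + s\<^sup>2" for s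
    unfolding power2_norm_eq_inner
    by (simp_all add: inner_add_left inner_add_right inner_commute algebra_simps power2_eq_square)
  have d1: "((\<lambda>s. (x \<bullet> y + s) ^ j) has_real_derivative real j * (x \<bullet> y + t) ^ (j - 1)) (at t)"
    by (auto intro!: derivative_eq_intros)
  have d2: "((\<lambda>s. (max 0 (1 - ((norm y)\<^sup>2 + 2 * s * (x \<bullet> y) + s\<^sup>2)))\<^sup>2) has_real_derivative
      2 * max 0 (1 - ((norm y)\<^sup>2 + 2 * t * (x \<bullet> y) + t\<^sup>2)) * (- (2 * (x \<bullet> y) + 2 * t))) (at t)"
    by (rule DERIV_chain2[OF has_real_derivative_max_0_square]) (auto intro!: derivative_eq_intros)
  have alg: "real j * p ^ (j - 1) * m\<^sup>2 + 2 * m * (- (2 * (x \<bullet> y) + 2 * t)) * p ^ j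
      = real j * p ^ (j - 1) * m\<^sup>2 - 4 * p ^ (j + 1) * m" if "p = x \<bullet> y + t" for p m :: real
    unfolding that by (simp add: algebra_simps)
  from DERIV_mult[OF d1 d2]
  show ?thesis
    unfolding z_def inner norm by (rule DERIV_cong) (rule alg, rule refl)
qed

text \<open>Integration by parts against the \<open>C\<^sup>1\<close> bump \<open>(x \<bullet> y)\<^sup>j (1 - |y|\<^sup>2)\<^sub>+\<^sup>2\<close>, differentiated in direction \<open>x\<close>.\<close>
lemma integral_ball_by_parts_inner_power:
  fixes x :: "'a::euclidean_space"
  assumes "norm x = 1"
  shows "integral (ball 0 1) (\<lambda>y. real j * (x \<bullet> y) ^ (j - 1) * (1 - (norm y)\<^sup>2)\<^sup>2
      - 4 * (x \<bullet> y) ^ (j + 1) * (1 - (norm y)\<^sup>2)) = 0"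
    (is "integral _ ?F = 0")
proof -
  define w where "w z = max 0 (1 - (norm z)\<^sup>2)" for z :: 'a
  define D where "D z = real j * (x \<bullet> z) ^ (j - 1) * (w z)\<^sup>2 - 4 * (x \<bullet> z) ^ (j + 1) * w z" for z
  have w_outside: "w z = 0" if "1 \<le> norm z" for z
    using that by (simp add: w_def one_le_power)
  have "integral UNIV D = 0"
  proof (rule integral_directional_derivative_eq_0)
    show "continuous_on UNIV (\<lambda>z. (x \<bullet> z) ^ j * (w z)\<^sup>2)" "continuous_on UNIV D"
      unfolding w_def D_def by (intro continuous_intros)+
    show "(x \<bullet> z) ^ j * (w z)\<^sup>2 = 0" if "1 \<le> norm z" for z
      using w_outside[OF that] by simp
    show "((\<lambda>t. (x \<bullet> (y + t *\<^sub>R x)) ^ j * (w (y + t *\<^sub>R x))\<^sup>2) has_real_derivative D (y + t *\<^sub>R x)) (at t)"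
      for y t
      unfolding w_def D_def by (rule has_real_derivative_inner_power_bump[OF assms])
  qed
  moreover have "D = (\<lambda>y. if y \<in> ball 0 1 then ?F y else 0)"
  proof
    fix y :: 'a
    show "D y = (if y \<in> ball 0 1 then ?F y else 0)"
    proof (cases "norm y < 1")
      case True
      then have "w y = 1 - (norm y)\<^sup>2"
        by (simp add: w_def power_le_one)
      then show ?thesis
        using True by (simp add: D_def)
    qed (simp add: D_def w_outside)
  qed
  ultimately show ?thesis
    by (simp only: integral_restrict_UNIV)
qed

section \<open>Moments over the unit ball\<close>

definition ball_moment :: "'a::euclidean_space \<Rightarrow> nat \<Rightarrow> real" where
  "ball_moment x k = integral (ball 0 1) (\<lambda>y. (x \<bullet> y / norm y) ^ k)"

lemma inner_div_norm_power_bounded: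
  fixes x y :: "'a::real_inner"
  assumes "norm x = 1"
  shows "\<bar>(x \<bullet> y / norm y) ^ k\<bar> \<le> 1"
proof -
  have "\<bar>x \<bullet> y\<bar> \<le> norm y"
    using Cauchy_Schwarz_ineq2[of x y] assms by simp
  then have "\<bar>x \<bullet> y / norm y\<bar> \<le> 1"
    by (simp add: abs_divide divide_le_eq)
  then show ?thesis
    by (simp add: power_abs power_le_one)
qed

lemma integral_ball_inner_power_mult_norm_power:
  fixes x :: "'a::euclidean_space"
  assumes "norm x = 1"
  shows "integral (ball 0 1) (\<lambda>y. (x \<bullet> y) ^ k * norm y ^ m)
       = real DIM('a) * ball_moment x k / (real DIM('a) + real (k + m))"
proof (rule eq_divide_imp)
  have "(x \<bullet> y) ^ k * norm y ^ m = norm y ^ (k + m) * (x \<bullet> y / norm y) ^ k" for y :: 'a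
    by (cases "y = 0") (simp_all add: power_add power_divide power_0_left)
  moreover have "(real DIM('a) + real (k + m)) * integral (ball 0 1) (\<lambda>y. norm y ^ (k + m) * (x \<bullet> y / norm y) ^ k)
      = real DIM('a) * ball_moment x k"
    unfolding ball_moment_def
  proof (rule integral_ball_norm_power_mult_homogeneous[OF _ _ inner_div_norm_power_bounded[OF assms]])
    show "(\<lambda>y. (x \<bullet> y / norm y) ^ k) \<in> borel_measurable borel"
      by measurable
    show "(x \<bullet> (c *\<^sub>R y) / norm (c *\<^sub>R y)) ^ k = (x \<bullet> y / norm y) ^ k" if "0 < c" for c y
      using that by (simp add: inner_scaleR_right)
  qed
  ultimately show "integral (ball 0 1) (\<lambda>y. (x \<bullet> y) ^ k * norm y ^ m) * (real DIM('a) + real (k + m))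
      = real DIM('a) * ball_moment x k"
    by (simp add: mult.commute)
qed (use DIM_positive[where 'a = 'a] in linarith)

lemma integrable_inner_power_mult_norm_power:
  fixes x :: "'a::euclidean_space"
  assumes "norm x = 1"
  shows "(\<lambda>y. (x \<bullet> y) ^ k * norm y ^ m) integrable_on ball 0 1"
proof (rule integrable_on_if_bounded_measurable[of _ _ 1])
  show "(\<lambda>y. (x \<bullet> y) ^ k * norm y ^ m) \<in> borel_measurable borel"
    by measurable
  fix y :: 'a
  assume "y \<in> ball 0 1"
  then have "norm y \<le> 1"
    by simp
  moreover have "\<bar>x \<bullet> y\<bar> \<le> norm y"
    using Cauchy_Schwarz_ineq2[of x y] assms by simp
  ultimately have "\<bar>x \<bullet> y\<bar> ^ k \<le> 1" "norm y ^ m \<le> 1"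
    by (simp_all add: power_le_one)
  then show "\<bar>(x \<bullet> y) ^ k * norm y ^ m\<bar> \<le> 1"
    by (simp add: abs_mult power_abs mult_le_one)
qed simp

lemma ball_moment_by_parts:
  fixes x :: "'a::euclidean_space"
  assumes "norm x = 1"
  defines "N \<equiv> real DIM('a)"
  shows "real j * ball_moment x (j - 1)
           * (1 / (N + real (j - 1)) - 2 / (N + real (j - 1) + 2) + 1 / (N + real (j - 1) + 4))
       = 4 * ball_moment x (j + 1) * (1 / (N + real j + 1) - 1 / (N + real j + 3))"
proof -
  define f where "f k m y = (x \<bullet> y) ^ k * norm y ^ m" for k m and y :: 'a
  define T where "T k m = integral (ball 0 1) (f k m)" for k m
  have T_has: "(f k m has_integral T k m) (ball 0 1)" for k m
    unfolding T_def f_def using integrable_inner_power_mult_norm_power[OF assms(1)] by (rule integrable_integral)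
  have T_val: "T k m = N * ball_moment x k / (N + real (k + m))" for k m
    unfolding T_def f_def N_def by (rule integral_ball_inner_power_mult_norm_power[OF assms(1)])
  have expand: "real j * (x \<bullet> y) ^ (j - 1) * (1 - (norm y)\<^sup>2)\<^sup>2 - 4 * (x \<bullet> y) ^ (j + 1) * (1 - (norm y)\<^sup>2)
      = real j * f (j - 1) 0 y - 2 * real j * f (j - 1) 2 y + real j * f (j - 1) 4 y
        - 4 * f (j + 1) 0 y + 4 * f (j + 1) 2 y" for y
    by (simp add: f_def power2_eq_square eval_nat_numeral algebra_simps)
  have "real j * T (j - 1) 0 - 2 * real j * T (j - 1) 2 + real j * T (j - 1) 4
      - 4 * T (j + 1) 0 + 4 * T (j + 1) 2
      = integral (ball 0 1) (\<lambda>y. real j * f (j - 1) 0 y - 2 * real j * f (j - 1) 2 y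
          + real j * f (j - 1) 4 y - 4 * f (j + 1) 0 y + 4 * f (j + 1) 2 y)"
    by (intro integral_unique[symmetric] has_integral_add has_integral_diff has_integral_mult_right T_has)
  also have "\<dots> = integral (ball 0 1) (\<lambda>y. real j * (x \<bullet> y) ^ (j - 1) * (1 - (norm y)\<^sup>2)\<^sup>2
      - 4 * (x \<bullet> y) ^ (j + 1) * (1 - (norm y)\<^sup>2))"
    by (intro integral_cong) (rule expand[symmetric])
  also have "\<dots> = 0"
    by (rule integral_ball_by_parts_inner_power[OF assms(1)])
  finally have "real j * T (j - 1) 0 - 2 * real j * T (j - 1) 2 + real j * T (j - 1) 4
      - 4 * T (j + 1) 0 + 4 * T (j + 1) 2 = 0" .
  moreover have "real j * T (j - 1) 0 - 2 * real j * T (j - 1) 2 + real j * T (j - 1) 4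
      - 4 * T (j + 1) 0 + 4 * T (j + 1) 2
      = N * (real j * ball_moment x (j - 1)
           * (1 / (N + real (j - 1)) - 2 / (N + real (j - 1) + 2) + 1 / (N + real (j - 1) + 4))
         - 4 * ball_moment x (j + 1) * (1 / (N + real j + 1) - 1 / (N + real j + 3)))"
    unfolding T_val by (simp add: algebra_simps)
  moreover have "0 < N"
    unfolding N_def by simp
  ultimately show ?thesis
    by simp
qed

lemma ball_moment_recurrence:
  fixes x :: "'a::euclidean_space"
  assumes "norm x = 1"
  shows "(real DIM('a) + real k) * ball_moment x (k + 2) = (real k + 1) * ball_moment x k"
proof -
  define a where "a = real DIM('a) + real k"
  define A B where "A = ball_moment x k" and "B = ball_moment x (k + 2)"
  have "0 < a"
    unfolding a_def by (simp add: add_pos_nonneg)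
  have "(real k + 1) * A * (1 / a - 2 / (a + 2) + 1 / (a + 4)) = 4 * B * (1 / (a + 2) - 1 / (a + 4))"
    using ball_moment_by_parts[OF assms, of "k + 1"]
    unfolding a_def A_def B_def by (simp add: algebra_simps)
  moreover have "(real k + 1) * A * (1 / a - 2 / (a + 2) + 1 / (a + 4)) - 4 * B * (1 / (a + 2) - 1 / (a + 4))
      = 8 * ((real k + 1) * A - a * B) / (a * (a + 2) * (a + 4))"
    using \<open>0 < a\<close> by (simp add: divide_simps) algebra
  ultimately have "a * B = (real k + 1) * A"
    using \<open>0 < a\<close> by simp
  then show ?thesis
    unfolding a_def A_def B_def .
qed

lemma ball_moment_1:
  fixes x :: "'a::euclidean_space"
  assumes "norm x = 1"
  shows "ball_moment x 1 = 0"
proof -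
  define N where "N = real DIM('a)"
  have "4 * ball_moment x 1 * (1 / (N + 1) - 1 / (N + 3)) = 0"
    using ball_moment_by_parts[OF assms, of 0] unfolding N_def by simp
  moreover have "1 / (N + 3) < 1 / (N + 1)"
    unfolding N_def by (simp add: frac_less2 add_pos_nonneg)
  ultimately show ?thesis
    by simp
qed

lemma ball_moment_0: "ball_moment (x::'a::euclidean_space) 0 = measure lebesgue (ball (0::'a) 1)"
  unfolding ball_moment_def by (simp add: lmeasure_integral[OF lmeasurable_ball])

lemma ball_moment_0_pos: "0 < ball_moment (x::'a::euclidean_space) 0"
  unfolding ball_moment_0 using content_ball_pos[of 1 "0::'a"] by simp

lemma same_recurrence_proportional:
  fixes a b :: "nat \<Rightarrow> real"
  assumes "c > 0"
    and rec_a: "\<And>k. (c + real k) * a (k + 2) = (real k + 1) * a k" and "a 1 = 0"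
    and rec_b: "\<And>k. (c + real k) * b (k + 2) = (real k + 1) * b k" and "b 1 = 0"
  shows "a k * b 0 = b k * a 0"
proof (induction k rule: nat_induct2)
  case (step k)
  have "(c + real k) * (a (k + 2) * b 0) = (real k + 1) * (a k * b 0)"
    using rec_a[of k] by (simp add: mult.assoc[symmetric])
  also have "\<dots> = (c + real k) * (b (k + 2) * a 0)"
    using rec_b[of k] step by (simp add: mult.assoc[symmetric])
  finally show ?case
    using \<open>c > 0\<close> by (simp add: add_pos_nonneg)
qed (use assms(3,5) in \<open>simp_all add: One_nat_def\<close>)

lemma ball_moment_eq_gegen_moment:
  fixes x :: "'a::euclidean_space"
  assumes "norm x = 1" and "DIM('a) \<ge> 2"
  shows "ball_moment x k = gegen_moment DIM('a) k * ball_moment x 0 / gegen_moment DIM('a) 0"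
proof -
  have "ball_moment x k * gegen_moment DIM('a) 0 = gegen_moment DIM('a) k * ball_moment x 0"
    by (rule same_recurrence_proportional[OF _ ball_moment_recurrence[OF assms(1)] ball_moment_1[OF assms(1)]
          gegen_moment_recurrence[OF assms(2)] gegen_moment_1[OF assms(2)]]) simp
  then show ?thesis
    using gegen_moment_0_pos[OF assms(2)] by (simp add: eq_divide_eq)
qed

lemma sphere_avg_poly_inner:
  fixes x :: "real ^ 'n"
  assumes "CARD('n) \<ge> 2" and "norm x = 1"
  shows "sphere_avg (\<lambda>y. poly p (x \<bullet> y)) = f0 CARD('n) p"
proof -
  let ?n = "CARD('n)"
  have "integral (ball 0 1) (\<lambda>y. poly p (x \<bullet> (y /\<^sub>R norm y)))
      = integral (ball 0 1) (\<lambda>y. \<Sum>k\<le>degree p. coeff p k * (x \<bullet> y / norm y) ^ k)"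
    by (simp add: poly_altdef inner_scaleR_right divide_inverse mult.commute)
  also have "\<dots> = (\<Sum>k\<le>degree p. coeff p k * ball_moment x k)"
  proof (subst integral_sum)
    fix k
    have "(\<lambda>y. (x \<bullet> y / norm y) ^ k) integrable_on ball 0 1"
    proof (rule integrable_on_if_bounded_measurable[of _ _ 1])
      show "(\<lambda>y. (x \<bullet> y / norm y) ^ k) \<in> borel_measurable borel"
        by measurable
    qed (simp_all add: inner_div_norm_power_bounded[OF assms(2)])
    from integrable_cmul[OF this, of "coeff p k"]
    show "(\<lambda>y. coeff p k * (x \<bullet> y / norm y) ^ k) integrable_on ball 0 1"
      by simp
  qed (simp_all add: ball_moment_def)
  also have "\<dots> = (\<Sum>k\<le>degree p. coeff p k * gegen_moment ?n k) * (ball_moment x 0 / gegen_moment ?n 0)"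
  proof -
    have "coeff p k * ball_moment x k
        = coeff p k * gegen_moment ?n k * (ball_moment x 0 / gegen_moment ?n 0)" for k
      using ball_moment_eq_gegen_moment[OF assms(2), of k] assms(1) by simp
    then show ?thesis
      by (simp add: sum_distrib_right sum_divide_distrib)
  qed
  also have "(\<Sum>k\<le>degree p. coeff p k * gegen_moment ?n k) = integral {-1..1} (\<lambda>t. poly p t * gegen_weight ?n t)"
    by (rule integral_poly_gegen_weight[symmetric, OF assms(1)])
  finally show ?thesis
    using ball_moment_0_pos[of x]
    unfolding sphere_avg_def f0_def ball_moment_0 gegen_moment_def by simp
qed

section \<open>Spherical designs\<close>

lemma continuous_on_Max_inner:
  fixes C :: "'a::real_inner set"
  assumes "finite C" and "C \<noteq> {}"
  shows "continuous_on S (\<lambda>x. Max ((\<lambda>y. x \<bullet> y) ` C))"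
  using assms
proof (induction C rule: finite_ne_induct)
  case (insert a F)
  have Max_image_insert: "(\<lambda>x. Max ((\<lambda>y. x \<bullet> y) ` insert a F)) = (\<lambda>x. max (x \<bullet> a) (Max ((\<lambda>y. x \<bullet> y) ` F)))"
    using insert.hyps by (simp add: fun_eq_iff)
  show ?case
    unfolding Max_image_insert by (intro continuous_on_max continuous_on_inner continuous_on_id continuous_on_const insert.IH)
qed (simp add: continuous_on_inner)

lemma s_C_attained:
  fixes C :: "(real ^ 'n) set"
  assumes "finite C" and "C \<noteq> {}" and "C \<subseteq> usphere"
  shows "\<exists>x\<in>usphere. \<forall>y\<in>C. x \<bullet> y \<in> {-1..s_C C}"
proof -
  obtain x where x: "x \<in> usphere"
    and x_min: "\<forall>z\<in>usphere. Max ((\<lambda>y. x \<bullet> y) ` C) \<le> Max ((\<lambda>y. z \<bullet> y) ` C)"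
    using continuous_attains_inf[OF compact_sphere[of 0 1] _ continuous_on_Max_inner[OF assms(1,2)]] by auto
  have s: "s_C C = Max ((\<lambda>y. x \<bullet> y) ` C)"
    unfolding s_C_def by (rule cInf_eq_minimum) (use x x_min in auto)
  have "x \<bullet> y \<in> {-1..s_C C}" if "y \<in> C" for y
  proof -
    have "\<bar>x \<bullet> y\<bar> \<le> 1"
      using Cauchy_Schwarz_ineq2[of x y] x assms(3) that by auto
    moreover have "x \<bullet> y \<le> s_C C"
      unfolding s using assms(1) that by simp
    ultimately show ?thesis
      by simp
  qed
  then show ?thesis
    using x by blast
qed

lemma U_poly_spherical_design:
  fixes C :: "(real ^ 'n) set"
  assumes "spherical_design \<tau> C" and "degree f \<le> \<tau>" and "norm x = 1" and "CARD('n) \<ge> 2"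
  shows "U (poly f) x C = f0 CARD('n) f * real (card C)"
proof -
  have "card C > 0"
    using assms(1) by (simp add: spherical_design_def card_gt_0_iff)
  have "(\<Sum>y\<in>C. poly f (x \<bullet> y)) / real (card C) = sphere_avg (\<lambda>y. poly f (x \<bullet> y))"
    using assms(1) poly_fun_deg_poly_inner[OF assms(2), of x] unfolding spherical_design_def by blast
  also have "\<dots> = f0 CARD('n) f"
    by (rule sphere_avg_poly_inner[OF assms(4,3)])
  finally show ?thesis
    using \<open>card C > 0\<close> by (simp add: U_def field_simps)
qed

lemma Ue_le_U_adm:
  assumes "f \<in> adm n s \<tau> h" and "\<forall>y\<in>C. x \<bullet> y \<in> {-1..s}"
  shows "Ue h x C \<le> ereal (U (poly f) x C)"
proof -
  have "(\<Sum>y\<in>C. h (x \<bullet> y)) \<le> (\<Sum>y\<in>C. ereal (poly f (x \<bullet> y)))"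
    using assms by (intro sum_mono) (auto simp: adm_def)
  then show ?thesis
    by (simp add: Ue_def U_def)
qed

theorem proposition4p2:
  fixes h :: "real \<Rightarrow> ereal" and \<tau> N :: nat and C :: "(real ^ 'n) set" and s :: real
  assumes "CARD('n) \<ge> 2"
    and "\<tau> > 0"
    and "spherical_design \<tau> C" and "card C = N"
    and "s = s_C C"
    and "f \<in> adm CARD('n) s \<tau> h"
  shows "(\<forall>x\<in>usphere. (\<forall>y\<in>C. x \<bullet> y \<in> {-1..s}) \<longrightarrow>
            Ue h x C \<le> ereal (U (poly f) x C) \<and> U (poly f) x C = f0 CARD('n) f * real (card C))
         \<and> Qh h C \<le> (INF g\<in>adm CARD('n) s \<tau> h. ereal (f0 CARD('n) g * real (card C)))"
proof -
  have bound: "Ue h x C \<le> ereal (f0 CARD('n) g * real (card C))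
      \<and> U (poly g) x C = f0 CARD('n) g * real (card C)"
    if "g \<in> adm CARD('n) s \<tau> h" and "x \<in> usphere" and "\<forall>y\<in>C. x \<bullet> y \<in> {-1..s}" for g x
    using Ue_le_U_adm[OF that(1,3)] U_poly_spherical_design[OF assms(3) _ _ assms(1), of g x] that
    by (simp add: adm_def)
  obtain x0 where "x0 \<in> usphere" and "\<forall>y\<in>C. x0 \<bullet> y \<in> {-1..s}"
    using s_C_attained[of C] assms(3,5) by (auto simp: spherical_design_def)
  then have "Qh h C \<le> ereal (f0 CARD('n) g * real (card C))" if "g \<in> adm CARD('n) s \<tau> h" for g
    using bound[OF that] order_trans[OF INF_lower[of x0 usphere "\<lambda>x. Ue h x C"]]
    unfolding Qh_def by blast
  then show ?thesis
    using bound[OF assms(6)] by (auto intro: INF_greatest)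
qed

end
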